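(* Let $\rho$ be a smooth function on an open interval $I$ with $\rho(t)\neq0$ for all $t\in I$, and let $\mu,\sigma$ be nonzero constants. Let $U(r,y),V(r,y)$ be smooth functions on $\mathbb{R}^2$ and define, for $(x,y,t)\in\mathbb{R}^2\times I$, $$u(x,y,t)=\rho(t)^{1/3}\,U\big(\rho(t)^{1/3}x,\,y\big),\qquad v(x,y,t)=\rho(t)^{2/3}\,V\big(\rho(t)^{1/3}x,\,y\big)-\frac{\rho'(t)}{9\mu}x,$$ where $\rho^{1/3}$ denotes the real cube root. Then $(u,v)$ solves $$\rho(t)u_t+3\mu(uv)_x+\sigma u_{xxx}=0,\qquad u_x=v_y$$ if and only if $(U,V)$ solves $$3\mu(UV)_r+\sigma U_{rrr}=0,\qquad U_r-V_y=0.$$ *)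

theory Defs
  imports "HOL-Analysis.Analysis"
begin

definition pdir :: "'a::real_normed_vector \<Rightarrow> ('a \<Rightarrow> real) \<Rightarrow> 'a \<Rightarrow> real" where
  "pdir i f x = deriv (\<lambda>t. f (x + t *\<^sub>R i)) 0"

fun Ck :: "nat \<Rightarrow> 'a::euclidean_space set \<Rightarrow> ('a \<Rightarrow> real) \<Rightarrow> bool" where
  "Ck 0 S f = continuous_on S f"
| "Ck (Suc k) S f =
     (continuous_on S f \<and>
      (\<forall>i\<in>Basis. \<forall>x\<in>S. (\<lambda>t. f (x + t *\<^sub>R i)) differentiable (at 0)) \<and>
      (\<forall>i\<in>Basis. Ck k S (pdir i f)))"

definition smooth_on :: "'a::euclidean_space set \<Rightarrow> ('a \<Rightarrow> real) \<Rightarrow> bool" where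
  "smooth_on S f \<longleftrightarrow> (\<forall>k. Ck k S f)"

end

theory Submission
  imports Defs
begin

text \<open>Write \<open>c = root 3 (\<rho> t)\<close>, so \<open>c\<^sup>3 = \<rho>\<close> and \<open>c' = \<rho>'/(3c\<^sup>2)\<close>. By the chain rule
  \<open>u\<^sub>x = c\<^sup>2 U\<^sub>r\<close>, \<open>u\<^sub>x\<^sub>x\<^sub>x = c\<^sup>4 U\<^sub>r\<^sub>r\<^sub>r\<close>, \<open>v\<^sub>y = c\<^sup>2 V\<^sub>y\<close>, and both \<open>\<rho> u\<^sub>t\<close> and the contribution of the
  linear term \<open>-\<rho>' x/(9\<mu>)\<close> of \<open>v\<close> to \<open>3\<mu>(uv)\<^sub>x\<close> equal \<open>\<plusminus>(\<rho>'/3)(c U + c\<^sup>2 x U\<^sub>r)\<close>, so they cancel.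
  Hence at \<open>(x, y, t)\<close> the system for \<open>(u, v)\<close> is \<open>c\<^sup>4\<close> resp. \<open>c\<^sup>2\<close> times the system for
  \<open>(U, V)\<close> at \<open>(c x, y)\<close>; as \<open>c \<noteq> 0\<close> and \<open>x \<mapsto> c x\<close> is onto, the two systems are
  equivalent (for the forward direction one fixed \<open>t \<in> I\<close> suffices, which is where \<open>I \<noteq> {}\<close>
  enters).\<close>

lemma differentiable_at_shift_0:
  fixes f :: "real \<Rightarrow> real"
  shows "(\<lambda>s. f (x + s)) differentiable (at 0) \<longleftrightarrow> f differentiable (at x)"
  using DERIV_shift[of f _ 0 x] by (simp add: real_differentiable_def add.commute)

lemma smooth_on_imp_differentiable:
  assumes "smooth_on S (f :: real \<Rightarrow> real)" "x \<in> S"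
  shows "f differentiable (at x)"
proof -
  have "Ck (Suc 0) S f"
    using assms(1) unfolding smooth_on_def by blast
  then show ?thesis
    using assms(2) differentiable_at_shift_0[of f x] by simp
qed

lemma smooth_on_differentiable_fst:
  fixes F :: "real \<Rightarrow> real \<Rightarrow> real"
  assumes "smooth_on S (\<lambda>p. F (fst p) (snd p))" "(r, y) \<in> S"
  shows "(\<lambda>r. F r y) differentiable (at r)"
proof -
  have "Ck (Suc 0) S (\<lambda>p. F (fst p) (snd p))"
    using assms(1) unfolding smooth_on_def by blast
  then have "(\<lambda>t. F (r + t) y) differentiable (at 0)"
    using assms(2) by (auto simp: Basis_prod_def)
  then show ?thesis
    using differentiable_at_shift_0[of "\<lambda>r. F r y" r] by simp
qed

lemma smooth_on_differentiable_snd: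
  fixes F :: "real \<Rightarrow> real \<Rightarrow> real"
  assumes "smooth_on S (\<lambda>p. F (fst p) (snd p))" "(r, y) \<in> S"
  shows "(\<lambda>y. F r y) differentiable (at y)"
proof -
  have "Ck (Suc 0) S (\<lambda>p. F (fst p) (snd p))"
    using assms(1) unfolding smooth_on_def by blast
  then have "(\<lambda>t. F r (y + t)) differentiable (at 0)"
    using assms(2) by (auto simp: Basis_prod_def)
  then show ?thesis
    using differentiable_at_shift_0[of "\<lambda>y. F r y" y] by simp
qed

lemma pdir_fst:
  fixes F :: "real \<Rightarrow> real \<Rightarrow> real"
  shows "pdir (1, 0) (\<lambda>p. F (fst p) (snd p)) = (\<lambda>p. deriv (\<lambda>r. F r (snd p)) (fst p))"
  by (rule ext) (simp add: pdir_def deriv_shift_0[of "\<lambda>r. F r _"] o_def)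

lemma smooth_on_deriv_fst:
  fixes F :: "real \<Rightarrow> real \<Rightarrow> real"
  assumes "smooth_on S (\<lambda>p. F (fst p) (snd p))"
  shows "smooth_on S (\<lambda>p. deriv (\<lambda>r. F r (snd p)) (fst p))"
  unfolding smooth_on_def
proof
  fix k
  have "Ck (Suc k) S (\<lambda>p. F (fst p) (snd p))"
    using assms unfolding smooth_on_def by blast
  then show "Ck k S (\<lambda>p. deriv (\<lambda>r. F r (snd p)) (fst p))"
    by (simp add: Basis_prod_def pdir_fst)
qed

lemma smooth_on_higher_deriv_fst:
  fixes F :: "real \<Rightarrow> real \<Rightarrow> real"
  assumes "smooth_on S (\<lambda>p. F (fst p) (snd p))"
  shows "smooth_on S (\<lambda>p. (deriv ^^ n) (\<lambda>r. F r (snd p)) (fst p))"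
proof (induction n)
  case 0
  show ?case
    using assms by simp
next
  case (Suc n)
  then show ?case
    using smooth_on_deriv_fst[of S "\<lambda>r y. (deriv ^^ n) (\<lambda>r. F r y) r"] by simp
qed

lemma higher_deriv_fst_differentiable:
  fixes F :: "real \<Rightarrow> real \<Rightarrow> real"
  assumes "smooth_on S (\<lambda>p. F (fst p) (snd p))" "(r, y) \<in> S"
  shows "(deriv ^^ n) (\<lambda>r. F r y) differentiable (at r)"
  using smooth_on_differentiable_fst[OF smooth_on_higher_deriv_fst[OF assms(1), of n] assms(2)] by simp

lemma has_real_derivative_scaled:
  fixes g :: "real \<Rightarrow> real"
  assumes "g differentiable (at (c * x))"
  shows "((\<lambda>x. a * g (c * x)) has_real_derivative a * c * deriv g (c * x)) (at x)"
proof -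
  have "(g has_real_derivative deriv g (c * x)) (at ((\<lambda>x. c * x) x))"
    using assms DERIV_deriv_iff_real_differentiable by simp
  from DERIV_chain2[OF this DERIV_cmult[OF DERIV_ident]]
  have "((\<lambda>x. g (c * x)) has_real_derivative deriv g (c * x) * (c * 1)) (at x)" .
  from DERIV_cmult[OF this, of a] show ?thesis
    by (simp add: ac_simps)
qed

lemma deriv_scaled:
  fixes g :: "real \<Rightarrow> real"
  assumes "\<And>r. g differentiable (at r)"
  shows "deriv (\<lambda>x. a * g (c * x)) = (\<lambda>x. a * c * deriv g (c * x))"
  using has_real_derivative_scaled[OF assms] DERIV_imp_deriv by blast

lemma DERIV_cube_root_comp:
  fixes \<rho> :: "real \<Rightarrow> real"
  assumes "(\<rho> has_real_derivative \<rho>') (at t)" "\<rho> t \<noteq> 0"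
  shows "((\<lambda>s. root 3 (\<rho> s)) has_real_derivative \<rho>' / (3 * (root 3 (\<rho> t))\<^sup>2)) (at t)"
proof -
  have "(root 3 has_real_derivative inverse (3 * (root 3 (\<rho> t))\<^sup>2)) (at (\<rho> t))"
    using assms(2) by (intro DERIV_real_root_generic) auto
  from DERIV_chain2[OF this assms(1)] show ?thesis
    by (simp add: field_simps)
qed

lemma time_deriv_self_similar:
  fixes \<rho> g :: "real \<Rightarrow> real"
  assumes "(\<rho> has_real_derivative \<rho>') (at t)" "\<rho> t \<noteq> 0"
    and "g differentiable (at (root 3 (\<rho> t) * x))"
  defines "c \<equiv> root 3 (\<rho> t)"
  shows "\<rho> t * deriv (\<lambda>s. root 3 (\<rho> s) * g (root 3 (\<rho> s) * x)) t
       = \<rho>' / 3 * (c * g (c * x) + c\<^sup>2 * x * deriv g (c * x))"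
proof -
  have c3: "c ^ 3 = \<rho> t" and c: "c \<noteq> 0"
    using assms(2) by (simp_all add: c_def odd_real_root_pow)
  have root: "((\<lambda>s. root 3 (\<rho> s)) has_real_derivative \<rho>' / (3 * c\<^sup>2)) (at t)"
    unfolding c_def by (rule DERIV_cube_root_comp[OF assms(1,2)])
  have "(g has_real_derivative deriv g (c * x)) (at ((\<lambda>s. root 3 (\<rho> s) * x) t))"
    using assms(3) DERIV_deriv_iff_real_differentiable by (simp add: c_def)
  from DERIV_chain2[OF this DERIV_cmult_right[OF root, of x]]
  have "((\<lambda>s. g (root 3 (\<rho> s) * x)) has_real_derivative deriv g (c * x) * (\<rho>' / (3 * c\<^sup>2) * x)) (at t)"
    by (simp add: c_def)
  from DERIV_mult[OF root this]
  have "deriv (\<lambda>s. root 3 (\<rho> s) * g (root 3 (\<rho> s) * x)) t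
      = \<rho>' / (3 * c\<^sup>2) * g (c * x) + c * (deriv g (c * x) * (\<rho>' / (3 * c\<^sup>2) * x))"
    by (intro DERIV_imp_deriv) (simp add: c_def mult.commute)
  then show ?thesis
    using c unfolding c3[symmetric] by (simp add: field_simps power2_eq_square power3_eq_cube)
qed

lemma flux_deriv_self_similar:
  fixes g h :: "real \<Rightarrow> real"
  assumes "g differentiable (at (c * x))" "h differentiable (at (c * x))"
  shows "deriv (\<lambda>x. (c * g (c * x)) * (c\<^sup>2 * h (c * x) - k * x)) x
       = c ^ 4 * (deriv g (c * x) * h (c * x) + g (c * x) * deriv h (c * x))
         - k * (c * g (c * x) + c\<^sup>2 * x * deriv g (c * x))"
proof -
  have "((\<lambda>x. c\<^sup>2 * h (c * x) - k * x) has_real_derivative c\<^sup>2 * c * deriv h (c * x) - k) (at x)"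
    using DERIV_diff[OF has_real_derivative_scaled[OF assms(2)] DERIV_cmult[OF DERIV_ident]] by simp
  from DERIV_mult[OF has_real_derivative_scaled[OF assms(1), where a = c] this] show ?thesis
    by (intro DERIV_imp_deriv) (simp add: algebra_simps power2_eq_square numeral_eq_Suc)
qed

lemma rescaled_kdv_identity:
  fixes \<rho> g h :: "real \<Rightarrow> real"
  assumes rho: "(\<rho> has_real_derivative \<rho>') (at t)" "\<rho> t \<noteq> 0" and mu: "\<mu> \<noteq> 0"
    and g: "\<And>r. g differentiable (at r)" "\<And>r. deriv g differentiable (at r)"
      "\<And>r. deriv (deriv g) differentiable (at r)"
    and h: "\<And>r. h differentiable (at r)"
  defines "c \<equiv> root 3 (\<rho> t)"
  shows "\<rho> t * deriv (\<lambda>s. root 3 (\<rho> s) * g (root 3 (\<rho> s) * x)) t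
       + 3 * \<mu> * deriv (\<lambda>x. (c * g (c * x)) * (c\<^sup>2 * h (c * x) - \<rho>' / (9 * \<mu>) * x)) x
       + \<sigma> * deriv (\<lambda>a. deriv (\<lambda>b. deriv (\<lambda>x. c * g (c * x)) b) a) x
     = c ^ 4 * (3 * \<mu> * deriv (\<lambda>r. g r * h r) (c * x) + \<sigma> * deriv (deriv (deriv g)) (c * x))"
proof -
  have "(g has_real_derivative deriv g (c * x)) (at (c * x))"
    and "(h has_real_derivative deriv h (c * x)) (at (c * x))"
    using g(1) h DERIV_deriv_iff_real_differentiable by blast+
  from DERIV_mult[OF this]
  have product: "deriv (\<lambda>r. g r * h r) (c * x) = deriv g (c * x) * h (c * x) + deriv h (c * x) * g (c * x)"
    by (rule DERIV_imp_deriv)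
  have third: "deriv (\<lambda>a. deriv (\<lambda>b. deriv (\<lambda>x. c * g (c * x)) b) a) x = c ^ 4 * deriv (deriv (deriv g)) (c * x)"
    using g by (simp add: deriv_scaled power4_eq_xxxx)
  show ?thesis
    using mu unfolding time_deriv_self_similar[OF rho g(1), folded c_def]
      flux_deriv_self_similar[OF g(1) h] product third
    by (simp add: field_simps)
qed

lemma rescaled_kdv_system_iff:
  fixes \<rho> :: "real \<Rightarrow> real" and U V :: "real \<Rightarrow> real \<Rightarrow> real"
    and u v :: "real \<Rightarrow> real \<Rightarrow> real \<Rightarrow> real"
  assumes rho: "\<rho> differentiable (at t)" "\<rho> t \<noteq> 0" and mu: "\<mu> \<noteq> 0"
    and U_smooth: "smooth_on UNIV (\<lambda>p. U (fst p) (snd p))"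
    and V_smooth: "smooth_on UNIV (\<lambda>p. V (fst p) (snd p))"
    and u_def: "\<And>x y t. u x y t = root 3 (\<rho> t) * U (root 3 (\<rho> t) * x) y"
    and v_def: "\<And>x y t. v x y t = (root 3 (\<rho> t))\<^sup>2 * V (root 3 (\<rho> t) * x) y
                                   - deriv \<rho> t / (9 * \<mu>) * x"
  defines "c \<equiv> root 3 (\<rho> t)"
  shows "(\<rho> t * deriv (\<lambda>s. u x y s) t
            + 3 * \<mu> * deriv (\<lambda>x'. u x' y t * v x' y t) x
            + \<sigma> * deriv (\<lambda>a. deriv (\<lambda>b. deriv (\<lambda>x'. u x' y t) b) a) x = 0
          \<and> deriv (\<lambda>x'. u x' y t) x = deriv (\<lambda>y'. v x y' t) y)
     \<longleftrightarrow> (3 * \<mu> * deriv (\<lambda>r. U r y * V r y) (c * x)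
            + \<sigma> * deriv (\<lambda>a. deriv (\<lambda>b. deriv (\<lambda>r. U r y) b) a) (c * x) = 0
          \<and> deriv (\<lambda>r. U r y) (c * x) - deriv (\<lambda>y'. V (c * x) y') y = 0)"
proof -
  have c: "c \<noteq> 0"
    using rho(2) by (simp add: c_def)
  have U_r: "(\<lambda>r. U r y) differentiable (at r)" "deriv (\<lambda>r. U r y) differentiable (at r)"
    "deriv (deriv (\<lambda>r. U r y)) differentiable (at r)" for r
    using higher_deriv_fst_differentiable[OF U_smooth UNIV_I, of 0]
      higher_deriv_fst_differentiable[OF U_smooth UNIV_I, of 1]
      higher_deriv_fst_differentiable[OF U_smooth UNIV_I, of 2] by (simp_all add: numeral_eq_Suc)
  have V_r: "(\<lambda>r. V r y) differentiable (at r)" for r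
    using higher_deriv_fst_differentiable[OF V_smooth UNIV_I, of 0] by simp
  have V_y: "(\<lambda>y'. V (c * x) y') differentiable (at y)"
    using smooth_on_differentiable_snd[OF V_smooth] by simp
  have evolution: "\<rho> t * deriv (\<lambda>s. u x y s) t
        + 3 * \<mu> * deriv (\<lambda>x'. u x' y t * v x' y t) x
        + \<sigma> * deriv (\<lambda>a. deriv (\<lambda>b. deriv (\<lambda>x'. u x' y t) b) a) x
      = c ^ 4 * (3 * \<mu> * deriv (\<lambda>r. U r y * V r y) (c * x)
          + \<sigma> * deriv (\<lambda>a. deriv (\<lambda>b. deriv (\<lambda>r. U r y) b) a) (c * x))"
    unfolding u_def v_def c_def
    by (rule rescaled_kdv_identity[OF rho(1)[folded DERIV_deriv_iff_real_differentiable] rho(2) mu U_r V_r])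
  have u_x: "deriv (\<lambda>x'. u x' y t) x = c\<^sup>2 * deriv (\<lambda>r. U r y) (c * x)"
    using deriv_scaled[of "\<lambda>r. U r y" c c] U_r(1) by (simp add: u_def c_def power2_eq_square)
  have "((\<lambda>y'. v x y' t) has_real_derivative c\<^sup>2 * deriv (\<lambda>y'. V (c * x) y') y) (at y)"
    using V_y unfolding v_def c_def[symmetric] DERIV_deriv_iff_real_differentiable[symmetric]
    by (auto intro!: derivative_eq_intros)
  then have v_y: "deriv (\<lambda>y'. v x y' t) y = c\<^sup>2 * deriv (\<lambda>y'. V (c * x) y') y"
    by (rule DERIV_imp_deriv)
  show ?thesis
    unfolding evolution u_x v_y using c by auto
qed

lemma all_rescale_iff:
  fixes c :: "'t \<Rightarrow> 'a::field"
  assumes "I \<noteq> {}" "\<And>t. t \<in> I \<Longrightarrow> c t \<noteq> 0"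
    and "\<And>x y t. t \<in> I \<Longrightarrow> P x y t \<longleftrightarrow> Q (c t * x) y"
  shows "(\<forall>x y. \<forall>t\<in>I. P x y t) \<longleftrightarrow> (\<forall>r y. Q r y)"
proof
  assume P: "\<forall>x y. \<forall>t\<in>I. P x y t"
  obtain t where t: "t \<in> I"
    using assms(1) by blast
  show "\<forall>r y. Q r y"
  proof (intro allI)
    fix r y
    have "Q (c t * (r / c t)) y"
      using P t assms(3) by blast
    then show "Q r y"
      using assms(2)[OF t] by simp
  qed
qed (use assms(3) in blast)

theorem mainTheorem3:
  fixes \<rho> :: "real \<Rightarrow> real" and I :: "real set" and \<mu> \<sigma> :: real
    and U V :: "real \<Rightarrow> real \<Rightarrow> real"
    and u v :: "real \<Rightarrow> real \<Rightarrow> real \<Rightarrow> real"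
  assumes I: "open I" "is_interval I" "I \<noteq> {}"
    and rho_smooth: "smooth_on I \<rho>"
    and rho_nz: "\<forall>t\<in>I. \<rho> t \<noteq> 0"
    and mu: "\<mu> \<noteq> 0" and sigma: "\<sigma> \<noteq> 0"
    and U_smooth: "smooth_on UNIV (\<lambda>p. U (fst p) (snd p))"
    and V_smooth: "smooth_on UNIV (\<lambda>p. V (fst p) (snd p))"
    and u_def: "\<And>x y t. u x y t = root 3 (\<rho> t) * U (root 3 (\<rho> t) * x) y"
    and v_def: "\<And>x y t. v x y t = (root 3 (\<rho> t))\<^sup>2 * V (root 3 (\<rho> t) * x) y
                                   - deriv \<rho> t / (9 * \<mu>) * x"
  shows "(\<forall>x y. \<forall>t\<in>I.
            \<rho> t * deriv (\<lambda>s. u x y s) t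
              + 3 * \<mu> * deriv (\<lambda>x'. u x' y t * v x' y t) x
              + \<sigma> * deriv (\<lambda>a. deriv (\<lambda>b. deriv (\<lambda>c. u c y t) b) a) x = 0
            \<and> deriv (\<lambda>x'. u x' y t) x = deriv (\<lambda>y'. v x y' t) y)
     \<longleftrightarrow>
         (\<forall>r y.
            3 * \<mu> * deriv (\<lambda>r'. U r' y * V r' y) r
              + \<sigma> * deriv (\<lambda>a. deriv (\<lambda>b. deriv (\<lambda>c. U c y) b) a) r = 0
            \<and> deriv (\<lambda>r'. U r' y) r - deriv (\<lambda>y'. V r y') y = 0)"
proof (rule all_rescale_iff[where c = "\<lambda>t. root 3 (\<rho> t)"])
  show "I \<noteq> {}"
    by (fact I(3))
  show "root 3 (\<rho> t) \<noteq> 0" if "t \<in> I" for t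
    using rho_nz that by simp
qed (rule rescaled_kdv_system_iff[OF smooth_on_imp_differentiable[OF rho_smooth] _ mu U_smooth V_smooth
      u_def v_def], use rho_nz in auto)

end
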